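(* Let $R$ be a commutative ring with identity, let $S$ and $T$ be multiplicative subsets of $R$, and let $M$ be a unitary $R$-module. Then: (1) If $A$ is an $R_T$-submodule of $M_T$, then $A=L_T$ for some $R$-submodule $L$ of $M$. (2) If $M$ is an $S$-Noetherian $R$-module, then $M_T$ is an $S_T$-Noetherian $R_T$-module. Furthermore, if $T$ consists of regular elements of $R$, then $M_T$ is an $S$-Noetherian $R_T$-module.
   Context: $S_T=\{s/t\mid s\in S,\ t\in T\}$, a multiplicative subset of $R_T$. A submodule $L$ of a module $M$ is $S$-finite if there exist $s\in S$ and a finitely generated submodule $F$ of $M$ with $Ls\subseteq F\subseteq L$; $M$ is $S$-Noetherian if every submodule of $M$ is $S$-finite. When $T$ consists of regular elements, $R$ is regarded as a subring of $R_T$, so $S$ is a multiplicative subset of $R_T$. *)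

theory Defs
  imports Complex_Main
begin

text \<open>A module is described by a set of scalars Rc, a carrier Mc, addition,
  zero and scalar multiplication.  This lets us speak uniformly about the
  R-module M and the R_T-module M_T (whose elements are equivalence classes).\<close>

definition gsubmod ::
  "'s set \<Rightarrow> 'v set \<Rightarrow> ('v \<Rightarrow> 'v \<Rightarrow> 'v) \<Rightarrow> 'v \<Rightarrow> ('s \<Rightarrow> 'v \<Rightarrow> 'v) \<Rightarrow> 'v set \<Rightarrow> bool" where
  "gsubmod Rc Mc add zero smul N \<longleftrightarrow>
     N \<subseteq> Mc \<and> zero \<in> N \<and> (\<forall>x\<in>N. \<forall>y\<in>N. add x y \<in> N) \<and> (\<forall>r\<in>Rc. \<forall>x\<in>N. smul r x \<in> N)"

definition gspan ::
  "'s set \<Rightarrow> 'v set \<Rightarrow> ('v \<Rightarrow> 'v \<Rightarrow> 'v) \<Rightarrow> 'v \<Rightarrow> ('s \<Rightarrow> 'v \<Rightarrow> 'v) \<Rightarrow> 'v set \<Rightarrow> 'v set" where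
  "gspan Rc Mc add zero smul G = \<Inter>{N. gsubmod Rc Mc add zero smul N \<and> G \<subseteq> N}"

definition gfin_gen ::
  "'s set \<Rightarrow> 'v set \<Rightarrow> ('v \<Rightarrow> 'v \<Rightarrow> 'v) \<Rightarrow> 'v \<Rightarrow> ('s \<Rightarrow> 'v \<Rightarrow> 'v) \<Rightarrow> 'v set \<Rightarrow> bool" where
  "gfin_gen Rc Mc add zero smul F \<longleftrightarrow>
     (\<exists>G. finite G \<and> G \<subseteq> Mc \<and> F = gspan Rc Mc add zero smul G)"

definition gS_finite ::
  "'s set \<Rightarrow> 'v set \<Rightarrow> ('v \<Rightarrow> 'v \<Rightarrow> 'v) \<Rightarrow> 'v \<Rightarrow> ('s \<Rightarrow> 'v \<Rightarrow> 'v) \<Rightarrow> 's set \<Rightarrow> 'v set \<Rightarrow> bool" where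
  "gS_finite Rc Mc add zero smul S L \<longleftrightarrow>
     (\<exists>s\<in>S. \<exists>F. gfin_gen Rc Mc add zero smul F \<and> smul s ` L \<subseteq> F \<and> F \<subseteq> L)"

definition gS_noetherian ::
  "'s set \<Rightarrow> 'v set \<Rightarrow> ('v \<Rightarrow> 'v \<Rightarrow> 'v) \<Rightarrow> 'v \<Rightarrow> ('s \<Rightarrow> 'v \<Rightarrow> 'v) \<Rightarrow> 's set \<Rightarrow> bool" where
  "gS_noetherian Rc Mc add zero smul S \<longleftrightarrow>
     (\<forall>L. gsubmod Rc Mc add zero smul L \<longrightarrow> gS_finite Rc Mc add zero smul S L)"

definition mult_subset :: "'r::comm_ring_1 set \<Rightarrow> bool" where
  "mult_subset T \<longleftrightarrow> 1 \<in> T \<and> (\<forall>a\<in>T. \<forall>b\<in>T. a * b \<in> T)"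

definition loc_rel :: "('r::comm_ring_1 \<Rightarrow> 'm::ab_group_add \<Rightarrow> 'm) \<Rightarrow> 'r set \<Rightarrow> (('m \<times> 'r) \<times> ('m \<times> 'r)) set" where
  "loc_rel scale T = {((m, t), (m', t')). t \<in> T \<and> t' \<in> T \<and>
       (\<exists>u\<in>T. scale u (scale t' m - scale t m') = 0)}"

definition frac :: "('r::comm_ring_1 \<Rightarrow> 'm::ab_group_add \<Rightarrow> 'm) \<Rightarrow> 'r set \<Rightarrow> 'm \<Rightarrow> 'r \<Rightarrow> ('m \<times> 'r) set" where
  "frac scale T m t = loc_rel scale T `` {(m, t)}"

definition loc_mod :: "('r::comm_ring_1 \<Rightarrow> 'm::ab_group_add \<Rightarrow> 'm) \<Rightarrow> 'r set \<Rightarrow> ('m \<times> 'r) set set" where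
  "loc_mod scale T = {frac scale T m t | m t. t \<in> T}"

definition loc_zero :: "('r::comm_ring_1 \<Rightarrow> 'm::ab_group_add \<Rightarrow> 'm) \<Rightarrow> 'r set \<Rightarrow> ('m \<times> 'r) set" where
  "loc_zero scale T = frac scale T 0 1"

definition loc_add :: "('r::comm_ring_1 \<Rightarrow> 'm::ab_group_add \<Rightarrow> 'm) \<Rightarrow> 'r set \<Rightarrow>
    ('m \<times> 'r) set \<Rightarrow> ('m \<times> 'r) set \<Rightarrow> ('m \<times> 'r) set" where
  "loc_add scale T X Y =
     (let (m, t) = (SOME p. p \<in> X); (m', t') = (SOME p. p \<in> Y)
      in frac scale T (scale t' m + scale t m') (t * t'))"

abbreviation loc_ring :: "'r::comm_ring_1 set \<Rightarrow> ('r \<times> 'r) set set" where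
  "loc_ring T \<equiv> loc_mod (*) T"

abbreviation rfrac :: "'r::comm_ring_1 set \<Rightarrow> 'r \<Rightarrow> 'r \<Rightarrow> ('r \<times> 'r) set" where
  "rfrac T r t \<equiv> frac (*) T r t"

definition loc_smul :: "('r::comm_ring_1 \<Rightarrow> 'm::ab_group_add \<Rightarrow> 'm) \<Rightarrow> 'r set \<Rightarrow>
    ('r \<times> 'r) set \<Rightarrow> ('m \<times> 'r) set \<Rightarrow> ('m \<times> 'r) set" where
  "loc_smul scale T x X =
     (let (r, s) = (SOME p. p \<in> x); (m, t) = (SOME p. p \<in> X)
      in frac scale T (scale r m) (s * t))"

definition loc_sub :: "('r::comm_ring_1 \<Rightarrow> 'm::ab_group_add \<Rightarrow> 'm) \<Rightarrow> 'r set \<Rightarrow> 'm set \<Rightarrow> ('m \<times> 'r) set set" where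
  "loc_sub scale T L = {frac scale T m t | m t. m \<in> L \<and> t \<in> T}"

definition loc_mset :: "'r::comm_ring_1 set \<Rightarrow> 'r set \<Rightarrow> ('r \<times> 'r) set set" where
  "loc_mset S T = {rfrac T s t | s t. s \<in> S \<and> t \<in> T}"

end

theory Submission
  imports Defs
begin

text \<open>Every element of M_T has the form (1/t)(m/1), so an R_T-submodule A of M_T is the
  localization of its contraction {m. m/1 \<in> A}, which is an R-submodule of M.  For (2), let L be
  a submodule of M_T with contraction N.  If s N \<subseteq> span G \<subseteq> N with G finite, then the images
  G/1 span a submodule F of M_T with (s/1) L \<subseteq> F \<subseteq> L: for m \<in> N we have s m/1 \<in> F
  because the contraction of F is a submodule containing G.  Since s/1 is already an element
  of S_T, this also settles the S_T-Noetherian claim.\<close>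

lemma mult_subset_one: "mult_subset T \<Longrightarrow> 1 \<in> T"
  by (simp add: mult_subset_def)

lemma mult_subset_mult: "mult_subset T \<Longrightarrow> a \<in> T \<Longrightarrow> b \<in> T \<Longrightarrow> a * b \<in> T"
  by (simp add: mult_subset_def)

lemma module_times: "module ((*) :: 'a::comm_ring_1 \<Rightarrow> 'a \<Rightarrow> 'a)"
  by unfold_locales (simp_all add: algebra_simps)

lemma gspan_subset: "gsubmod Rc Mc add zero smul N \<Longrightarrow> G \<subseteq> N \<Longrightarrow> gspan Rc Mc add zero smul G \<subseteq> N"
  unfolding gspan_def by blast

lemma gspan_superset: "G \<subseteq> gspan Rc Mc add zero smul G"
  unfolding gspan_def by blast

lemma gsubmod_gspan:
  "gsubmod Rc Mc add zero smul Mc \<Longrightarrow> G \<subseteq> Mc \<Longrightarrow> gsubmod Rc Mc add zero smul (gspan Rc Mc add zero smul G)"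
  unfolding gspan_def gsubmod_def by blast

lemma gS_noetherian_mono:
  "S \<subseteq> S' \<Longrightarrow> gS_noetherian Rc Mc add zero smul S \<Longrightarrow> gS_noetherian Rc Mc add zero smul S'"
  unfolding gS_noetherian_def gS_finite_def by blast

definition loc_contr :: "('r::comm_ring_1 \<Rightarrow> 'm::ab_group_add \<Rightarrow> 'm) \<Rightarrow> 'r set \<Rightarrow> ('m \<times> 'r) set set \<Rightarrow> 'm set" where
  "loc_contr scale T A = {m. frac scale T m 1 \<in> A}"

context module
begin

lemma gsubmod_UNIV_iff_subspace: "gsubmod UNIV UNIV (+) 0 scale N \<longleftrightarrow> subspace N"
  unfolding gsubmod_def subspace_def by blast

lemma loc_rel_iff: "((m, t), (m', t')) \<in> loc_rel scale T \<longleftrightarrow>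
    t \<in> T \<and> t' \<in> T \<and> (\<exists>u\<in>T. scale (u * t') m = scale (u * t) m')"
  by (auto simp: loc_rel_def scale_right_diff_distrib)

lemma loc_rel_refl: "mult_subset T \<Longrightarrow> t \<in> T \<Longrightarrow> ((m, t), (m, t)) \<in> loc_rel scale T"
  unfolding loc_rel_iff by (auto intro: mult_subset_one)

lemma loc_rel_sym: "((a, s), (b, t)) \<in> loc_rel scale T \<Longrightarrow> ((b, t), (a, s)) \<in> loc_rel scale T"
  unfolding loc_rel_iff by metis

lemma loc_rel_trans:
  assumes T: "mult_subset T"
    and ab: "((a, t1), (b, t2)) \<in> loc_rel scale T" and bc: "((b, t2), (c, t3)) \<in> loc_rel scale T"
  shows "((a, t1), (c, t3)) \<in> loc_rel scale T"
proof -
  from ab obtain u where u: "u \<in> T" "scale (u * t2) a = scale (u * t1) b" "t1 \<in> T" "t2 \<in> T"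
    unfolding loc_rel_iff by blast
  from bc obtain v where v: "v \<in> T" "scale (v * t3) b = scale (v * t2) c" "t3 \<in> T"
    unfolding loc_rel_iff by blast
  have "scale (u * v * t2 * t3) a = scale (v * t3) (scale (u * t2) a)" by (simp add: mult_ac)
  also have "\<dots> = scale (u * t1) (scale (v * t3) b)" using u by (simp add: mult_ac)
  also have "\<dots> = scale (u * v * t2 * t1) c" using v by (simp add: mult_ac)
  finally show ?thesis
    unfolding loc_rel_iff using u v T by (metis mult_subset_mult)
qed

lemma frac_eq_iff:
  assumes T: "mult_subset T" and "t' \<in> T"
  shows "frac scale T m t = frac scale T m' t' \<longleftrightarrow> ((m, t), (m', t')) \<in> loc_rel scale T"
proof
  assume "frac scale T m t = frac scale T m' t'"
  moreover have "(m', t') \<in> frac scale T m' t'"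
    using loc_rel_refl[OF T \<open>t' \<in> T\<close>] by (simp add: frac_def)
  ultimately show "((m, t), (m', t')) \<in> loc_rel scale T" unfolding frac_def by blast
next
  assume "((m, t), (m', t')) \<in> loc_rel scale T"
  then show "frac scale T m t = frac scale T m' t'"
    unfolding frac_def using loc_rel_sym loc_rel_trans[OF T] by fast
qed

lemma loc_rel_some_frac:
  assumes "mult_subset T" and "t \<in> T"
  shows "((m, t), SOME p. p \<in> frac scale T m t) \<in> loc_rel scale T"
proof -
  have "(m, t) \<in> frac scale T m t" using loc_rel_refl[OF assms] by (simp add: frac_def)
  then have "(SOME p. p \<in> frac scale T m t) \<in> frac scale T m t" by (rule someI)
  then show ?thesis by (simp add: frac_def)
qed

text \<open>loc_add and loc_smul act on representatives picked by SOME; the next two lemmas make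
  the result independent of that choice.\<close>

lemma loc_rel_add:
  assumes T: "mult_subset T"
    and r: "((m, t), (a, b)) \<in> loc_rel scale T" and r': "((m', t'), (a', b')) \<in> loc_rel scale T"
  shows "((scale t' m + scale t m', t * t'), (scale b' a + scale b a', b * b')) \<in> loc_rel scale T"
proof -
  from r obtain u where u: "u \<in> T" "scale (u * b) m = scale (u * t) a" "t \<in> T" "b \<in> T"
    unfolding loc_rel_iff by blast
  from r' obtain v where v: "v \<in> T" "scale (v * b') m' = scale (v * t') a'" "t' \<in> T" "b' \<in> T"
    unfolding loc_rel_iff by blast
  have "scale (u * v * (b * b')) (scale t' m + scale t m') =
        scale (v * t' * b') (scale (u * b) m) + scale (u * t * b) (scale (v * b') m')"
    by (simp add: scale_right_distrib mult_ac)
  also have "\<dots> = scale (u * v * (t * t')) (scale b' a + scale b a')"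
    using u v by (simp add: scale_right_distrib mult_ac)
  finally show ?thesis
    unfolding loc_rel_iff using u v T by (metis mult_subset_mult)
qed

lemma loc_rel_smul:
  assumes T: "mult_subset T"
    and r: "((r, q), (c, d)) \<in> loc_rel (*) T" and m: "((m, t), (a, b)) \<in> loc_rel scale T"
  shows "((scale r m, q * t), (scale c a, d * b)) \<in> loc_rel scale T"
proof -
  from r obtain u where u: "u \<in> T" "u * d * r = u * q * c" "q \<in> T" "d \<in> T"
    unfolding module.loc_rel_iff[OF module_times] by blast
  from m obtain v where v: "v \<in> T" "scale (v * b) m = scale (v * t) a" "t \<in> T" "b \<in> T"
    unfolding loc_rel_iff by blast
  have "scale (u * v * (d * b)) (scale r m) = scale (u * d * r) (scale (v * b) m)"
    by (simp add: mult_ac)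
  also have "\<dots> = scale (u * v * (q * t)) (scale c a)"
    using u v by (simp add: mult_ac)
  finally show ?thesis
    unfolding loc_rel_iff using u v T by (metis mult_subset_mult)
qed

lemma loc_add_frac:
  assumes T: "mult_subset T" and "t \<in> T" "t' \<in> T"
  shows "loc_add scale T (frac scale T m t) (frac scale T m' t') =
         frac scale T (scale t' m + scale t m') (t * t')"
proof -
  obtain a b where ab: "(SOME p. p \<in> frac scale T m t) = (a, b)" by fastforce
  obtain a' b' where ab': "(SOME p. p \<in> frac scale T m' t') = (a', b')" by fastforce
  have "((scale t' m + scale t m', t * t'), (scale b' a + scale b a', b * b')) \<in> loc_rel scale T"
    using loc_rel_add[OF T] loc_rel_some_frac[OF T] assms ab ab' by metis
  then have "((scale b' a + scale b a', b * b'), (scale t' m + scale t m', t * t')) \<in> loc_rel scale T"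
    by (rule loc_rel_sym)
  then show ?thesis
    using assms by (simp add: loc_add_def ab ab' frac_eq_iff mult_subset_mult)
qed

lemma loc_smul_frac:
  assumes T: "mult_subset T" and "q \<in> T" "t \<in> T"
  shows "loc_smul scale T (rfrac T r q) (frac scale T m t) = frac scale T (scale r m) (q * t)"
proof -
  obtain c d where cd: "(SOME p. p \<in> rfrac T r q) = (c, d)" by fastforce
  obtain a b where ab: "(SOME p. p \<in> frac scale T m t) = (a, b)" by fastforce
  have "((scale r m, q * t), (scale c a, d * b)) \<in> loc_rel scale T"
    using loc_rel_smul[OF T] module.loc_rel_some_frac[OF module_times T] loc_rel_some_frac[OF T]
      assms cd ab by metis
  then have "((scale c a, d * b), (scale r m, q * t)) \<in> loc_rel scale T"
    by (rule loc_rel_sym)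
  then show ?thesis
    using assms by (simp add: loc_smul_def ab cd frac_eq_iff mult_subset_mult)
qed

lemma frac_scale_cancel:
  assumes T: "mult_subset T" and "s \<in> T" "t \<in> T"
  shows "frac scale T (scale s m) (s * t) = frac scale T m t"
  using assms mult_subset_one[OF T] mult_subset_mult[OF T]
  by (subst frac_eq_iff) (auto simp: loc_rel_iff mult_ac intro!: bexI[of _ 1])

lemma gsubmod_loc_sub:
  assumes T: "mult_subset T" and N: "subspace N"
  shows "gsubmod (loc_ring T) (loc_mod scale T) (loc_add scale T) (loc_zero scale T) (loc_smul scale T)
           (loc_sub scale T N)"
  unfolding gsubmod_def
proof (intro conjI ballI)
  show "loc_sub scale T N \<subseteq> loc_mod scale T"
    unfolding loc_sub_def loc_mod_def by blast
  show "loc_zero scale T \<in> loc_sub scale T N"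
    unfolding loc_zero_def loc_sub_def using subspace_0[OF N] mult_subset_one[OF T] by blast
next
  fix X Y assume "X \<in> loc_sub scale T N" "Y \<in> loc_sub scale T N"
  then obtain m t m' t' where "X = frac scale T m t" "Y = frac scale T m' t'"
    and "m \<in> N" "m' \<in> N" "t \<in> T" "t' \<in> T"
    unfolding loc_sub_def by blast
  then show "loc_add scale T X Y \<in> loc_sub scale T N"
    using loc_add_frac[OF T] mult_subset_mult[OF T] N
    unfolding loc_sub_def by (blast intro: subspace_add subspace_scale)
next
  fix x X assume "x \<in> loc_ring T" "X \<in> loc_sub scale T N"
  then obtain r q m t where "x = rfrac T r q" "X = frac scale T m t" "m \<in> N" "q \<in> T" "t \<in> T"
    unfolding loc_sub_def loc_mod_def by blast
  then show "loc_smul scale T x X \<in> loc_sub scale T N"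
    using loc_smul_frac[OF T] mult_subset_mult[OF T] N
    unfolding loc_sub_def by (blast intro: subspace_scale)
qed

lemma gsubmod_loc_mod:
  assumes "mult_subset T"
  shows "gsubmod (loc_ring T) (loc_mod scale T) (loc_add scale T) (loc_zero scale T) (loc_smul scale T)
           (loc_mod scale T)"
proof -
  have "loc_mod scale T = loc_sub scale T UNIV"
    unfolding loc_mod_def loc_sub_def by blast
  then show ?thesis using gsubmod_loc_sub[OF assms subspace_UNIV] by simp
qed

lemma subspace_loc_contr:
  assumes T: "mult_subset T"
    and A: "gsubmod (loc_ring T) (loc_mod scale T) (loc_add scale T) (loc_zero scale T) (loc_smul scale T) A"
  shows "subspace (loc_contr scale T A)"
proof (rule subspaceI)
  have one: "1 \<in> T" using mult_subset_one[OF T] .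
  have zero_A: "loc_zero scale T \<in> A"
    and add_A: "\<And>X Y. X \<in> A \<Longrightarrow> Y \<in> A \<Longrightarrow> loc_add scale T X Y \<in> A"
    and smul_A: "\<And>x X. x \<in> loc_ring T \<Longrightarrow> X \<in> A \<Longrightarrow> loc_smul scale T x X \<in> A"
    using A unfolding gsubmod_def by blast+
  show "0 \<in> loc_contr scale T A"
    using zero_A by (simp add: loc_contr_def loc_zero_def)
  show "x + y \<in> loc_contr scale T A" if "x \<in> loc_contr scale T A" "y \<in> loc_contr scale T A" for x y
  proof -
    have "loc_add scale T (frac scale T x 1) (frac scale T y 1) \<in> A"
      using that add_A by (simp add: loc_contr_def)
    then show ?thesis by (simp add: loc_contr_def loc_add_frac[OF T one one] add.commute)
  qed
  show "scale c x \<in> loc_contr scale T A" if "x \<in> loc_contr scale T A" for c x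
  proof -
    have "rfrac T c 1 \<in> loc_ring T" unfolding loc_mod_def using one by blast
    then have "loc_smul scale T (rfrac T c 1) (frac scale T x 1) \<in> A"
      using that smul_A by (simp add: loc_contr_def)
    then show ?thesis by (simp add: loc_contr_def loc_smul_frac[OF T one one])
  qed
qed

lemma loc_sub_loc_contr:
  assumes T: "mult_subset T"
    and A: "gsubmod (loc_ring T) (loc_mod scale T) (loc_add scale T) (loc_zero scale T) (loc_smul scale T) A"
  shows "loc_sub scale T (loc_contr scale T A) = A"
proof
  have one: "1 \<in> T" using mult_subset_one[OF T] .
  have smul_A: "loc_smul scale T (rfrac T r q) X \<in> A" if "q \<in> T" "X \<in> A" for r q X
  proof -
    have "rfrac T r q \<in> loc_ring T" unfolding loc_mod_def using that(1) by blast
    then show ?thesis using A that(2) unfolding gsubmod_def by blast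
  qed
  show "loc_sub scale T (loc_contr scale T A) \<subseteq> A"
  proof
    fix X assume "X \<in> loc_sub scale T (loc_contr scale T A)"
    then obtain m t where X: "X = frac scale T m t" "t \<in> T" "frac scale T m 1 \<in> A"
      unfolding loc_sub_def loc_contr_def by blast
    have "loc_smul scale T (rfrac T 1 t) (frac scale T m 1) = X"
      using X by (simp add: loc_smul_frac[OF T X(2) one])
    then show "X \<in> A" using smul_A[OF X(2) X(3), of 1] by simp
  qed
  show "A \<subseteq> loc_sub scale T (loc_contr scale T A)"
  proof
    fix X assume "X \<in> A"
    then obtain m t where X: "X = frac scale T m t" "t \<in> T"
      using A unfolding gsubmod_def loc_mod_def by blast
    have "loc_smul scale T (rfrac T t 1) X = frac scale T m 1"
      using X frac_scale_cancel[OF T X(2) one] by (simp add: loc_smul_frac[OF T one X(2)])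
    then have "m \<in> loc_contr scale T A"
      using smul_A[OF one \<open>X \<in> A\<close>, of t] by (simp add: loc_contr_def)
    then show "X \<in> loc_sub scale T (loc_contr scale T A)"
      unfolding loc_sub_def using X by blast
  qed
qed

lemma gS_finite_loc_sub:
  assumes T: "mult_subset T" and N: "subspace N" and fin: "gS_finite UNIV UNIV (+) 0 scale S N"
  shows "gS_finite (loc_ring T) (loc_mod scale T) (loc_add scale T) (loc_zero scale T) (loc_smul scale T)
           ((\<lambda>s. rfrac T s 1) ` S) (loc_sub scale T N)"
proof -
  let ?gsubmod = "gsubmod (loc_ring T) (loc_mod scale T) (loc_add scale T) (loc_zero scale T) (loc_smul scale T)"
  let ?gspan = "gspan (loc_ring T) (loc_mod scale T) (loc_add scale T) (loc_zero scale T) (loc_smul scale T)"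
  have one: "1 \<in> T" using mult_subset_one[OF T] .
  obtain s G where s: "s \<in> S" "scale s ` N \<subseteq> gspan UNIV UNIV (+) 0 scale G"
    and G: "finite G" "gspan UNIV UNIV (+) 0 scale G \<subseteq> N"
    using fin unfolding gS_finite_def gfin_gen_def by blast
  define G' where "G' = (\<lambda>g. frac scale T g 1) ` G"
  define F where "F = ?gspan G'"
  have "G' \<subseteq> loc_mod scale T"
    unfolding G'_def loc_mod_def using one by blast
  then have F: "?gsubmod F"
    unfolding F_def by (rule gsubmod_gspan[OF gsubmod_loc_mod[OF T]])
  have fin_gen: "gfin_gen (loc_ring T) (loc_mod scale T) (loc_add scale T) (loc_zero scale T) (loc_smul scale T) F"
    unfolding gfin_gen_def F_def using G(1) \<open>G' \<subseteq> loc_mod scale T\<close> G'_def by blast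
  have "G' \<subseteq> loc_sub scale T N"
    using G(2) gspan_superset[of G] one unfolding G'_def loc_sub_def by blast
  then have F_sub: "F \<subseteq> loc_sub scale T N"
    unfolding F_def by (rule gspan_subset[OF gsubmod_loc_sub[OF T N]])
  have "G \<subseteq> loc_contr scale T F"
    using gspan_superset[of G'] unfolding F_def G'_def loc_contr_def by blast
  then have span_G: "gspan UNIV UNIV (+) 0 scale G \<subseteq> loc_contr scale T F"
    using subspace_loc_contr[OF T F] by (simp add: gspan_subset gsubmod_UNIV_iff_subspace)
  have "loc_smul scale T (rfrac T s 1) X \<in> F" if "X \<in> loc_sub scale T N" for X
  proof -
    obtain m t where X: "X = frac scale T m t" "t \<in> T" "m \<in> N"
      using \<open>X \<in> loc_sub scale T N\<close> unfolding loc_sub_def by blast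
    have "frac scale T (scale s m) 1 \<in> F"
      using s(2) span_G X(3) unfolding loc_contr_def by blast
    moreover have "rfrac T 1 t \<in> loc_ring T"
      unfolding loc_mod_def using X(2) by blast
    ultimately have "loc_smul scale T (rfrac T 1 t) (frac scale T (scale s m) 1) \<in> F"
      using F unfolding gsubmod_def by blast
    moreover have "loc_smul scale T (rfrac T 1 t) (frac scale T (scale s m) 1) = loc_smul scale T (rfrac T s 1) X"
      using X by (simp add: loc_smul_frac[OF T X(2) one] loc_smul_frac[OF T one X(2)])
    ultimately show ?thesis by simp
  qed
  then show ?thesis
    unfolding gS_finite_def using s(1) fin_gen F_sub by blast
qed

lemma gS_noetherian_loc_mod:
  assumes T: "mult_subset T" and noeth: "gS_noetherian UNIV UNIV (+) 0 scale S"
  shows "gS_noetherian (loc_ring T) (loc_mod scale T) (loc_add scale T) (loc_zero scale T)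
           (loc_smul scale T) ((\<lambda>s. rfrac T s 1) ` S)"
  unfolding gS_noetherian_def
proof (intro allI impI)
  fix L
  assume L: "gsubmod (loc_ring T) (loc_mod scale T) (loc_add scale T) (loc_zero scale T) (loc_smul scale T) L"
  have N: "subspace (loc_contr scale T L)" by (rule subspace_loc_contr[OF T L])
  then have "gS_finite UNIV UNIV (+) 0 scale S (loc_contr scale T L)"
    using noeth unfolding gS_noetherian_def gsubmod_UNIV_iff_subspace by blast
  from gS_finite_loc_sub[OF T N this]
  show "gS_finite (loc_ring T) (loc_mod scale T) (loc_add scale T) (loc_zero scale T) (loc_smul scale T)
          ((\<lambda>s. rfrac T s 1) ` S) L"
    by (simp add: loc_sub_loc_contr[OF T L])
qed

end

theorem lemma2p1:
  fixes scale :: "'r::comm_ring_1 \<Rightarrow> 'm::ab_group_add \<Rightarrow> 'm"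
    and S T :: "'r set"
  assumes "module scale"
    and "mult_subset S"
    and "mult_subset T"
  shows "(\<forall>A. gsubmod (loc_ring T) (loc_mod scale T) (loc_add scale T) (loc_zero scale T)
                 (loc_smul scale T) A
            \<longrightarrow> (\<exists>L. module.subspace scale L \<and> A = loc_sub scale T L))
         \<and> (gS_noetherian UNIV UNIV (+) 0 scale S \<longrightarrow>
              gS_noetherian (loc_ring T) (loc_mod scale T) (loc_add scale T) (loc_zero scale T)
                (loc_smul scale T) (loc_mset S T)
              \<and> ((\<forall>t\<in>T. \<forall>r. t * r = 0 \<longrightarrow> r = 0) \<longrightarrow>
                   gS_noetherian (loc_ring T) (loc_mod scale T) (loc_add scale T) (loc_zero scale T)
                     (loc_smul scale T) ((\<lambda>s. rfrac T s 1) ` S)))"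
proof -
  interpret module scale by (rule assms(1))
  note T = assms(3)
  have S_T: "(\<lambda>s. rfrac T s 1) ` S \<subseteq> loc_mset S T"
    unfolding loc_mset_def using mult_subset_one[OF T] by blast
  show ?thesis
  proof (intro conjI allI impI)
    fix A
    assume A: "gsubmod (loc_ring T) (loc_mod scale T) (loc_add scale T) (loc_zero scale T) (loc_smul scale T) A"
    show "\<exists>L. subspace L \<and> A = loc_sub scale T L"
      using subspace_loc_contr[OF T A] loc_sub_loc_contr[OF T A] by auto
  next
    assume "gS_noetherian UNIV UNIV (+) 0 scale S"
    then show "gS_noetherian (loc_ring T) (loc_mod scale T) (loc_add scale T) (loc_zero scale T)
                (loc_smul scale T) (loc_mset S T)"
      by (rule gS_noetherian_mono[OF S_T gS_noetherian_loc_mod[OF T]])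
  next
    \<comment> \<open>Regularity of T is only needed on paper to embed S into R_T; here S enters as s/1.\<close>
    assume "gS_noetherian UNIV UNIV (+) 0 scale S"
    then show "gS_noetherian (loc_ring T) (loc_mod scale T) (loc_add scale T) (loc_zero scale T)
                (loc_smul scale T) ((\<lambda>s. rfrac T s 1) ` S)"
      by (rule gS_noetherian_loc_mod[OF T])
  qed
qed

end
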